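(* Let $n \geq 1$ and $z \geq 2$ be integers, and let $\epsilon > 0$ be a constant. Let $\mathbf{f}_1^{(0)}, \dots, \mathbf{f}_n^{(0)}$ be arbitrary probability vectors in $\mathbb{R}^z$. For $t \geq 1$ define recursively, for all $i, j \in \{1,\dots,n\}$, $$p_{i,j}^{(t)} = \frac{\alpha_i^{(t)}}{\epsilon + D\left(\mathbf{f}_i^{(t-1)}, \mathbf{f}_j^{(t-1)}\right)}, \qquad \mathbf{f}_i^{(t)} = \sum_{j=1}^n p_{i,j}^{(t)} \mathbf{f}_j^{(t-1)},$$ where $\alpha_i^{(t)} > 0$ is the normalizing constant chosen so that $\sum_{j=1}^n p_{i,j}^{(t)} = 1$, and $D(\mathbf{u}, \mathbf{v}) = \sqrt{\frac{1}{z}\sum_{k=1}^{z} (u_k - v_k)^2}$. Then for every $i, j \in \{1,\dots,n\}$, $p_{i,j}^{(t)} \to \frac{1}{n}$ as $t \to \infty$.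
   Context: The vectors $\mathbf{f}_i^{(t)}$ represent the probabilistic opinion of expert $i$ after $t$ revisions; $p_{i,j}^{(t)}$ is the weight expert $i$ assigns to expert $j$'s opinion at revision $t$. *)

theory Defs
  imports "HOL-Analysis.Analysis"
begin

text \<open>Vectors in R^z are functions nat => real, with coordinates indexed by k < z
  (coordinate k corresponds to the paper's k+1). Experts are indexed by i < n.\<close>

definition dist_D :: "nat \<Rightarrow> (nat \<Rightarrow> real) \<Rightarrow> (nat \<Rightarrow> real) \<Rightarrow> real" where
  "dist_D z u v = sqrt ((1 / real z) * (\<Sum>k<z. (u k - v k)^2))"

definition prob_vec :: "nat \<Rightarrow> (nat \<Rightarrow> real) \<Rightarrow> bool" where
  "prob_vec z u \<longleftrightarrow> (\<forall>k<z. u k \<ge> 0) \<and> (\<Sum>k<z. u k) = 1"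

definition weight :: "nat \<Rightarrow> nat \<Rightarrow> real \<Rightarrow> (nat \<Rightarrow> nat \<Rightarrow> real) \<Rightarrow> nat \<Rightarrow> nat \<Rightarrow> real" where
  "weight n z eps f i j =
     (1 / (\<Sum>l<n. 1 / (eps + dist_D z (f i) (f l)))) / (eps + dist_D z (f i) (f j))"

fun opinions :: "nat \<Rightarrow> nat \<Rightarrow> real \<Rightarrow> (nat \<Rightarrow> nat \<Rightarrow> real) \<Rightarrow> nat \<Rightarrow> nat \<Rightarrow> nat \<Rightarrow> real" where
  "opinions n z eps f0 0 = f0"
| "opinions n z eps f0 (Suc t) =
     (\<lambda>i k. \<Sum>j<n. weight n z eps (opinions n z eps f0 t) i j * opinions n z eps f0 t j k)"

text \<open>pw t i j = p_{i,j}^{(t)} for t >= 1\<close>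
definition pweight :: "nat \<Rightarrow> nat \<Rightarrow> real \<Rightarrow> (nat \<Rightarrow> nat \<Rightarrow> real) \<Rightarrow> nat \<Rightarrow> nat \<Rightarrow> nat \<Rightarrow> real" where
  "pweight n z eps f0 t i j = weight n z eps (opinions n z eps f0 (t - 1)) i j"

end

theory Submission
  imports Defs
begin

text \<open>Every coordinate of every opinion stays in [0,1], so all distances are at most 1 and
  every weight is at least c = eps / (n (eps + 1)). Averaging with a row-stochastic matrix
  whose entries are all at least c shrinks the spread max - min of each coordinate by the
  factor 1 - c. Hence the opinions reach consensus geometrically fast, all distances tend
  to 0, and every weight tends to (1/eps) / (n/eps) = 1/n.\<close>

lemma dist_D_nonneg: "0 \<le> dist_D z u v"
  unfolding dist_D_def by (simp add: sum_nonneg)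

lemma dist_D_le_uniform:
  assumes "\<forall>k<z. \<bar>u k - v k\<bar> \<le> d" and "0 \<le> d"
  shows "dist_D z u v \<le> d"
proof (cases "z = 0")
  case True
  then show ?thesis using assms by (simp add: dist_D_def)
next
  case False
  have "(\<Sum>k<z. (u k - v k)^2) \<le> (\<Sum>k<z. d^2)"
    using assms by (intro sum_mono) (metis abs_ge_zero lessThan_iff power2_abs power_mono)
  then have "(1 / real z) * (\<Sum>k<z. (u k - v k)^2) \<le> d^2"
    using False by (simp add: divide_simps mult.commute)
  then have "dist_D z u v \<le> sqrt (d^2)"
    unfolding dist_D_def using real_sqrt_le_mono by blast
  then show ?thesis using assms(2) by simp
qed

lemma weight_normalizer_pos:
  fixes n :: nat
  assumes "0 < eps" and "1 \<le> n"
  shows "0 < (\<Sum>l<n. 1 / (eps + dist_D z (f i) (f l)))"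
proof (rule sum_pos)
  show "{..<n} \<noteq> {}" using assms(2) by (simp add: lessThan_empty_iff)
qed (use assms dist_D_nonneg[of z] in \<open>auto intro: add_pos_nonneg\<close>)

lemma weight_pos:
  assumes "0 < eps" and "1 \<le> n"
  shows "0 < weight n z eps f i j"
  using weight_normalizer_pos[OF assms, of z f i] dist_D_nonneg[of z "f i" "f j"] assms
  unfolding weight_def by (simp add: add_pos_nonneg)

lemma sum_weight:
  assumes "0 < eps" and "1 \<le> n"
  shows "(\<Sum>j<n. weight n z eps f i j) = 1"
proof -
  let ?S = "\<Sum>l<n. 1 / (eps + dist_D z (f i) (f l))"
  have "(\<Sum>j<n. weight n z eps f i j) = (\<Sum>j<n. 1 / (eps + dist_D z (f i) (f j))) / ?S"
    unfolding weight_def sum_divide_distrib by (intro sum.cong) auto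
  then show ?thesis using weight_normalizer_pos[OF assms, of z f i] by simp
qed

lemma weight_ge:
  assumes "0 < eps" and "1 \<le> n" and "\<forall>l<n. dist_D z (f i) (f l) \<le> 1" and "j < n"
  shows "eps / (real n * (eps + 1)) \<le> weight n z eps f i j"
proof -
  let ?S = "\<Sum>l<n. 1 / (eps + dist_D z (f i) (f l))"
  let ?d = "eps + dist_D z (f i) (f j)"
  have "?S \<le> (\<Sum>l<n. 1 / eps)"
    using assms(1) dist_D_nonneg[of z]
    by (intro sum_mono divide_left_mono) (auto intro: add_pos_nonneg mult_pos_pos)
  then have le: "?S * ?d \<le> (real n / eps) * (eps + 1)"
    using assms dist_D_nonneg[of z] weight_normalizer_pos[OF assms(1,2), of z f i]
    by (intro mult_mono) auto
  have "0 < ?S * ?d"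
    using assms(1) weight_normalizer_pos[OF assms(1,2), of z f i] dist_D_nonneg[of z]
    by (intro mult_pos_pos add_pos_nonneg) auto
  moreover have "0 < (real n / eps) * (eps + 1)" using assms(1,2) by simp
  ultimately have "1 / ((real n / eps) * (eps + 1)) \<le> 1 / (?S * ?d)"
    using divide_left_mono[OF le zero_le_one] mult_pos_pos by blast
  moreover have "1 / ((real n / eps) * (eps + 1)) = eps / (real n * (eps + 1))"
    using assms(1) by simp
  ultimately show ?thesis unfolding weight_def by simp
qed

lemma tendsto_weight:
  assumes "0 < eps" and "1 \<le> n" and "j < n"
    and "\<And>l. l < n \<Longrightarrow> (\<lambda>t. dist_D z (f t i) (f t l)) \<longlonglongrightarrow> 0"
  shows "(\<lambda>t. weight n z eps (f t) i j) \<longlonglongrightarrow> 1 / real n"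
proof -
  have "(\<lambda>t. weight n z eps (f t) i j) \<longlonglongrightarrow> (1 / (\<Sum>l<n. 1 / (eps + 0))) / (eps + 0)"
    unfolding weight_def using assms by (intro tendsto_intros) auto
  then show ?thesis using assms(1) by simp
qed

lemma convex_comb_le:
  fixes w x :: "'a \<Rightarrow> real"
  assumes "finite S" and "\<forall>j\<in>S. 0 \<le> w j" and "sum w S = 1" and "\<forall>j\<in>S. x j \<le> b"
    and "m \<in> S" and "c \<le> w m" and "x m \<le> a" and "a \<le> b"
  shows "(\<Sum>j\<in>S. w j * x j) \<le> c * a + (1 - c) * b"
proof -
  have "(\<Sum>j\<in>S. w j * x j) = b - (\<Sum>j\<in>S. w j * (b - x j))"
    using assms(3) by (simp add: right_diff_distrib sum_subtractf sum_distrib_right[symmetric])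
  moreover have "w m * (b - x m) \<le> (\<Sum>j\<in>S. w j * (b - x j))"
    using assms(1,2,4,5) by (intro member_le_sum) auto
  moreover have "c * (b - a) \<le> w m * (b - x m)"
    using assms(2,5-8) by (intro mult_mono) auto
  ultimately show ?thesis by (simp add: algebra_simps)
qed

lemma convex_comb_ge:
  fixes w x :: "'a \<Rightarrow> real"
  assumes "finite S" and "\<forall>j\<in>S. 0 \<le> w j" and "sum w S = 1" and "\<forall>j\<in>S. a \<le> x j"
    and "m \<in> S" and "c \<le> w m" and "b \<le> x m" and "a \<le> b"
  shows "c * b + (1 - c) * a \<le> (\<Sum>j\<in>S. w j * x j)"
  using convex_comb_le[OF assms(1-3), where x = "\<lambda>j. - x j" and a = "- b" and b = "- a"
      and m = m and c = c] assms(4-8)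
  by (simp add: sum_negf)

text \<open>Dobrushin-type contraction: the rows of w all put mass at least c on the positions of
  the minimum and of the maximum of x.\<close>
lemma stochastic_spread_contract:
  fixes w :: "'a \<Rightarrow> 'a \<Rightarrow> real" and x :: "'a \<Rightarrow> real"
  assumes "finite S" and "S \<noteq> {}"
    and "\<forall>i\<in>S. \<forall>j\<in>S. 0 \<le> w i j" and "\<forall>i\<in>S. sum (w i) S = 1"
    and "\<forall>i\<in>S. \<forall>j\<in>S. c \<le> w i j" and "0 \<le> c" and "c \<le> 1"
    and "\<forall>i\<in>S. \<forall>l\<in>S. x i - x l \<le> d" and "i \<in> S" and "l \<in> S"
  shows "(\<Sum>j\<in>S. w i j * x j) - (\<Sum>j\<in>S. w l j * x j) \<le> (1 - c) * d"
proof -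
  let ?a = "Min (x ` S)" and ?b = "Max (x ` S)"
  have "?a \<in> x ` S" and "?b \<in> x ` S" using assms(1,2) by simp_all
  then obtain ja jb where ja: "ja \<in> S" "x ja = ?a" and jb: "jb \<in> S" "x jb = ?b" by auto
  have range: "\<forall>j\<in>S. ?a \<le> x j \<and> x j \<le> ?b" using assms(1) by auto
  have "(\<Sum>j\<in>S. w i j * x j) \<le> c * ?a + (1 - c) * ?b"
    using assms range ja jb by (intro convex_comb_le[where m = ja]) auto
  moreover have "c * ?b + (1 - c) * ?a \<le> (\<Sum>j\<in>S. w l j * x j)"
    using assms range ja jb by (intro convex_comb_ge[where m = jb]) auto
  moreover have "(1 - 2 * c) * (?b - ?a) \<le> (1 - c) * d"
  proof -
    have "(1 - 2 * c) * (?b - ?a) \<le> (1 - c) * (?b - ?a)"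
      using assms(6) range ja by (intro mult_right_mono) auto
    also have "\<dots> \<le> (1 - c) * d"
      using assms(7,8) ja jb by (intro mult_left_mono) (metis, simp)
    finally show ?thesis .
  qed
  ultimately show ?thesis by (simp add: algebra_simps)
qed

lemma opinions_unit_interval:
  fixes f :: "nat \<Rightarrow> nat \<Rightarrow> real"
  assumes "0 < eps" and "1 \<le> n" and "\<And>i. i < n \<Longrightarrow> prob_vec z (f i)"
    and "i < n" and "k < z"
  shows "0 \<le> opinions n z eps f t i k \<and> opinions n z eps f t i k \<le> 1"
  using assms(4,5)
proof (induction t arbitrary: i)
  case 0
  then have "prob_vec z (f i)" using assms(3) by simp
  moreover from this have "f i k \<le> (\<Sum>k<z. f i k)"
    using \<open>k < z\<close> unfolding prob_vec_def by (intro member_le_sum) auto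
  ultimately show ?case using \<open>k < z\<close> unfolding prob_vec_def by auto
next
  case (Suc t)
  let ?w = "weight n z eps (opinions n z eps f t) i"
  have "(\<Sum>j<n. ?w j * opinions n z eps f t j k) \<le> (\<Sum>j<n. ?w j * 1)"
    using Suc.IH Suc.prems weight_pos[OF assms(1,2)]
    by (intro sum_mono mult_left_mono) (auto simp: less_imp_le)
  moreover have "0 \<le> (\<Sum>j<n. ?w j * opinions n z eps f t j k)"
    using Suc.IH Suc.prems weight_pos[OF assms(1,2)]
    by (intro sum_nonneg) (auto simp: less_imp_le)
  ultimately show ?case using sum_weight[OF assms(1,2)] by simp
qed

lemma consensus_rate_bounds:
  assumes "0 < eps" and "1 \<le> n"
  shows "0 < eps / (real n * (eps + 1))" and "eps / (real n * (eps + 1)) \<le> 1"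
proof -
  show "0 < eps / (real n * (eps + 1))" using assms by simp
  have "eps \<le> real n * (eps + 1)"
    using assms mult_mono[of 1 "real n" eps "eps + 1"] by simp
  then show "eps / (real n * (eps + 1)) \<le> 1" using assms by (simp add: divide_le_eq)
qed

lemma opinions_spread_le:
  fixes f :: "nat \<Rightarrow> nat \<Rightarrow> real"
  assumes "0 < eps" and "1 \<le> n" and "\<And>i. i < n \<Longrightarrow> prob_vec z (f i)"
    and "k < z" and "i < n" and "l < n"
  shows "opinions n z eps f t i k - opinions n z eps f t l k
           \<le> (1 - eps / (real n * (eps + 1))) ^ t"
proof -
  have unit: "0 \<le> opinions n z eps f s i' k' \<and> opinions n z eps f s i' k' \<le> 1"
    if "i' < n" and "k' < z" for s i' k'
    using opinions_unit_interval assms(1-3) that by blast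
  show ?thesis
    using assms(5,6)
  proof (induction t arbitrary: i l)
    case 0
    then show ?case using unit[of l k 0] unit[of i k 0] assms(4) by simp
  next
    case (Suc t)
    let ?F = "opinions n z eps f t" and ?c = "eps / (real n * (eps + 1))"
    have "\<forall>i<n. \<forall>l<n. dist_D z (?F i) (?F l) \<le> 1"
    proof (intro allI impI dist_D_le_uniform)
      fix i l k' assume "i < n" "l < n" "k' < z"
      then show "\<bar>?F i k' - ?F l k'\<bar> \<le> 1" using unit[of i k' t] unit[of l k' t] by (simp add: abs_le_iff)
    qed simp
    then have "\<forall>i<n. \<forall>j<n. ?c \<le> weight n z eps ?F i j"
      using weight_ge[OF assms(1,2)] by blast
    then have "(\<Sum>j<n. weight n z eps ?F i j * ?F j k) - (\<Sum>j<n. weight n z eps ?F l j * ?F j k)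
                 \<le> (1 - ?c) * (1 - ?c) ^ t"
      using Suc assms(1,2) weight_pos[OF assms(1,2)] sum_weight[OF assms(1,2)]
        consensus_rate_bounds[OF assms(1,2)]
      by (intro stochastic_spread_contract) (auto simp: less_imp_le)
    then show ?case by simp
  qed
qed

theorem corollary1:
  fixes n z :: nat and eps :: real and f0 :: "nat \<Rightarrow> nat \<Rightarrow> real"
  assumes "n \<ge> 1" and "z \<ge> 2" and "eps > 0"
    and "\<And>i. i < n \<Longrightarrow> prob_vec z (f0 i)"
    and "i < n" and "j < n"
  shows "(\<lambda>t. pweight n z eps f0 t i j) \<longlonglongrightarrow> 1 / real n"
proof -
  let ?F = "opinions n z eps f0" and ?c = "eps / (real n * (eps + 1))"
  have geometric: "(\<lambda>t. (1 - ?c) ^ t) \<longlonglongrightarrow> 0"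
    using consensus_rate_bounds[OF assms(3,1)] by (intro LIMSEQ_power_zero) simp
  have "(\<lambda>t. dist_D z (?F t i) (?F t l)) \<longlonglongrightarrow> 0" if "l < n" for l
  proof (rule real_tendsto_sandwich[OF _ _ tendsto_const geometric])
    have "dist_D z (?F t i) (?F t l) \<le> (1 - ?c) ^ t" for t
      using opinions_spread_le[OF assms(3,1,4) _ assms(5) that]
        opinions_spread_le[OF assms(3,1,4) _ that assms(5)] consensus_rate_bounds[OF assms(3,1)]
      by (intro dist_D_le_uniform) (auto simp: abs_le_iff)
    then show "\<forall>\<^sub>F t in sequentially. dist_D z (?F t i) (?F t l) \<le> (1 - ?c) ^ t" by simp
  qed (simp add: dist_D_nonneg)
  then have "(\<lambda>t. pweight n z eps f0 (Suc t) i j) \<longlonglongrightarrow> 1 / real n"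
    unfolding pweight_def using tendsto_weight[OF assms(3,1,6)] by simp
  then show ?thesis by (rule LIMSEQ_imp_Suc)
qed

end
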